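(* For $w\in[0,1]$, $\delta\in\{0,1\}$ and $p\in(0,1)$, let $l(w,\delta,p)=(1-wp)^{1-\delta}$ and $\tilde l(w,\delta,p)=(1-p)^{w(1-\delta)}$, and let $d(w,\delta,p)=|l(w,\delta,p)-\tilde l(w,\delta,p)|$. Then for all such $w,\delta,p$, \[ d(w,\delta,p)\le (1-\beta p)-(1-p)^{\beta},\qquad\text{where } \beta=\frac{\log\{-p/\log(1-p)\}}{\log(1-p)}. \] In particular, for any $p\in(0,0.4]$ and all $w\in[0,1]$, $\delta\in\{0,1\}$, one has $d(w,\delta,p)<0.0255$.
   Context: This arises in a dose-finding likelihood: $p$ is the toxicity probability at a dose, $\delta$ indicates whether a patient's binary toxicity outcome has been ascertained ($\delta=1$) or is still pending ($\delta=0$), and $w$ is a weight in $[0,1]$ equal to the probability that a patient who will eventually experience toxicity has already experienced it by the current follow-up time. The factor $(1-wp)^{1-\delta}$ is the exact likelihood contribution of a pending patient and $(1-p)^{w(1-\delta)}$ is its approximation. *)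

theory Defs
  imports Complex_Main
begin

definition lik :: "real \<Rightarrow> real \<Rightarrow> real \<Rightarrow> real" where
  "lik w \<delta> p = (1 - w * p) powr (1 - \<delta>)"

definition lik_approx :: "real \<Rightarrow> real \<Rightarrow> real \<Rightarrow> real" where
  "lik_approx w \<delta> p = (1 - p) powr (w * (1 - \<delta>))"

definition lik_dist :: "real \<Rightarrow> real \<Rightarrow> real \<Rightarrow> real" where
  "lik_dist w \<delta> p = \<bar>lik w \<delta> p - lik_approx w \<delta> p\<bar>"

definition beta_star :: "real \<Rightarrow> real" where
  "beta_star p = ln (- p / ln (1 - p)) / ln (1 - p)"

end

theory Submission
  imports Defs "HOL-Analysis.Analysis"
begin

text \<open>For an ascertained patient both factors equal 1. For a pending one the distance is the
  gap \<open>1 - w p - (1 - p)\<^sup>w\<close>, which is concave in \<open>w\<close>; the tangent-line bound for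
  \<open>exp\<close> at its critical point \<open>beta_star p\<close>, where \<open>(1 - p)\<^bsup>\<beta>\<^esup> = -p / ln (1 - p)\<close>,
  shows that this point is the maximum. The gap is also increasing in \<open>p\<close>, so for \<open>p \<le> 0.4\<close>
  it suffices to bound it at \<open>p = 0.4\<close>. There its maximum is about \<open>0.02546\<close>, attained where
  \<open>0.6\<^sup>w \<approx> 0.783\<close>; the tangent of \<open>0.6\<^sup>w\<close> at that point together with five-digit
  bounds on \<open>ln 0.6\<close> and \<open>ln 0.783\<close> (from Taylor polynomials of \<open>exp\<close>) stays below \<open>0.0255\<close>.\<close>

definition lik_gap :: "real \<Rightarrow> real \<Rightarrow> real" where
  "lik_gap w p = 1 - w * p - (1 - p) powr w"

lemma powr_le_affine:
  fixes x w :: real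
  assumes "0 < x" "0 \<le> w" "w \<le> 1"
  shows "x powr w \<le> 1 + w * (x - 1)"
  using Youngs_inequality_0[of w "1 - w" x 1] assms by (simp add: algebra_simps)

lemma powr_ge_tangent:
  fixes q a w :: real
  assumes "0 < q"
  shows "q powr a * (1 + (w - a) * ln q) \<le> q powr w"
proof -
  have "exp (a * ln q) * (1 + (w * ln q - a * ln q)) \<le> exp (a * ln q) * exp (w * ln q - a * ln q)"
    by (intro mult_left_mono) auto
  then show ?thesis
    using assms by (simp add: powr_def exp_diff algebra_simps)
qed

lemma exp_ge_Maclaurin_sum:
  fixes x :: real
  assumes "even n"
  shows "(\<Sum>m<n. x ^ m / fact m) \<le> exp x"
proof -
  obtain t where "exp x = (\<Sum>m<n. x ^ m / fact m) + exp t / fact n * x ^ n"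
    using Maclaurin_exp_le[of x n] by blast
  moreover have "0 \<le> exp t / fact n * x ^ n"
    using assms by (simp add: zero_le_even_power)
  ultimately show ?thesis by linarith
qed

lemma ln_06_ge: "-0.51084 \<le> ln (0.6 :: real)"
proof -
  have "5 / 3 \<le> (\<Sum>m<8. 0.51084 ^ m / fact m :: real)"
    by (simp add: eval_nat_numeral fact_numeral)
  also have "\<dots> \<le> exp 0.51084"
    by (rule exp_ge_Maclaurin_sum) simp
  finally show ?thesis
    by (simp add: ln_ge_iff exp_minus field_simps)
qed

lemma ln_0783_le: "ln (0.783 :: real) \<le> -0.2446"
proof -
  have "0.783 \<le> (\<Sum>m<8. (-0.2446) ^ m / fact m :: real)"
    by (simp add: eval_nat_numeral fact_numeral)
  also have "\<dots> \<le> exp (-0.2446)"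
    by (rule exp_ge_Maclaurin_sum) simp
  finally have "ln 0.783 \<le> ln (exp (-0.2446 :: real))"
    by (intro ln_mono) auto
  then show ?thesis by simp
qed

lemma lik_gap_nonneg:
  assumes "0 \<le> w" "w \<le> 1" "p < 1"
  shows "0 \<le> lik_gap w p"
  using powr_le_affine[of "1 - p" w] assms by (simp add: lik_gap_def algebra_simps)

lemma lik_dist_pending:
  assumes "0 \<le> w" "w \<le> 1" "w * p < 1" "p < 1"
  shows "lik_dist w 0 p = lik_gap w p"
  using lik_gap_nonneg[OF assms(1,2,4)] assms(3)
  by (simp add: lik_dist_def lik_def lik_approx_def lik_gap_def)

lemma lik_dist_ascertained:
  assumes "w * p \<noteq> 1" "p \<noteq> 1"
  shows "lik_dist w 1 p = 0"
  using assms by (simp add: lik_dist_def lik_def lik_approx_def)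

lemma powr_beta_star:
  assumes "0 < p" "p < 1"
  shows "(1 - p) powr beta_star p = - p / ln (1 - p)"
proof -
  have "0 < - p / ln (1 - p)"
    using assms by (simp add: divide_pos_neg)
  then show ?thesis
    using assms by (simp add: powr_def beta_star_def)
qed

lemma lik_gap_le_beta_star:
  assumes "0 < p" "p < 1"
  shows "lik_gap w p \<le> lik_gap (beta_star p) p"
proof -
  have "ln (1 - p) < 0"
    using assms by simp
  moreover have "- p / ln (1 - p) * (1 + (w - beta_star p) * ln (1 - p)) \<le> (1 - p) powr w"
    using powr_ge_tangent[of "1 - p" "beta_star p" w] assms by (simp add: powr_beta_star)
  ultimately show ?thesis
    using assms by (simp add: lik_gap_def powr_beta_star field_simps)
qed

lemma lik_gap_mono:
  assumes "0 \<le> w" "w \<le> 1" "0 \<le> p" "p \<le> p'" "p' < 1"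
  shows "lik_gap w p \<le> lik_gap w p'"
proof -
  define q r where "q = 1 - p" and "r = 1 - p'"
  have qr: "0 < r" "r \<le> q" "q \<le> 1"
    using assms by (auto simp: q_def r_def)
  have "r powr w = q powr w * (r / q) powr w"
    using qr by (simp add: powr_mult[symmetric])
  also have "\<dots> \<le> q powr w * (1 + w * (r / q - 1))"
    using powr_le_affine[of "r / q" w] qr assms(1,2) by (simp add: mult_left_mono)
  also have "\<dots> = q powr w + w * (r - q) * (q powr w / q)"
    using qr by (simp add: field_simps)
  also have "\<dots> \<le> q powr w + w * (r - q)"
  proof -
    have "q \<le> q powr w"
      using powr_mono'[of w 1 q] qr assms(2) by simp
    then have "1 \<le> q powr w / q"
      using qr by simp
    moreover have "w * (r - q) \<le> 0"
      using qr assms(1) by (simp add: mult_nonneg_nonpos)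
    ultimately show ?thesis
      using mult_left_mono_neg[of 1 "q powr w / q" "w * (r - q)"] by simp
  qed
  finally show ?thesis
    by (simp add: lik_gap_def q_def r_def algebra_simps)
qed

lemma lik_gap_at_04:
  assumes "0 \<le> w"
  shows "lik_gap w 0.4 < 0.0255"
proof -
  define a :: real where "a = ln 0.783 / ln 0.6"
  have a_ln: "a * ln 0.6 = ln 0.783"
    by (simp add: a_def)
  have powr_a: "0.6 powr a = (0.783 :: real)"
    by (simp add: a_def powr_def)
  have "0.6 powr a * (1 + (w - a) * ln 0.6) \<le> (0.6 :: real) powr w"
    by (rule powr_ge_tangent) simp
  then have tangent: "0.783 * (1 + w * ln 0.6 - ln 0.783) \<le> (0.6 :: real) powr w"
    unfolding powr_a left_diff_distrib a_ln by (simp add: algebra_simps)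
  have "- 0.51084 * w \<le> ln (0.6 :: real) * w"
    using mult_right_mono[OF ln_06_ge assms] .
  then have "0.783 * (1 - 0.51084 * w + 0.2446) \<le> 0.783 * (1 + w * ln 0.6 - ln (0.783 :: real))"
    using ln_0783_le by (intro mult_left_mono) (simp_all add: algebra_simps)
  with tangent have "0.783 * (1 - 0.51084 * w + 0.2446) \<le> (0.6 :: real) powr w"
    by linarith
  then show ?thesis
    using assms by (simp add: lik_gap_def)
qed

theorem theorem1:
  fixes w \<delta> p :: real
  assumes "0 \<le> w" "w \<le> 1" "\<delta> \<in> {0, 1}" "0 < p" "p < 1"
  shows "lik_dist w \<delta> p \<le> (1 - beta_star p * p) - (1 - p) powr (beta_star p)
     \<and> (p \<le> 0.4 \<longrightarrow> lik_dist w \<delta> p < 0.0255)"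
proof -
  have "w * p < 1"
    using assms mult_left_le_one_le[of p w] by linarith
  then have dist_le_gap: "lik_dist w \<delta> p \<le> lik_gap w p"
    using assms lik_dist_pending lik_dist_ascertained lik_gap_nonneg by auto
  have "lik_gap w p \<le> (1 - beta_star p * p) - (1 - p) powr (beta_star p)"
    using lik_gap_le_beta_star[OF assms(4,5)] by (simp add: lik_gap_def)
  moreover have "lik_gap w p < 0.0255" if "p \<le> 0.4"
    using lik_gap_mono[of w p "0.4"] lik_gap_at_04 assms that by fastforce
  ultimately show ?thesis
    using dist_le_gap by auto
qed

end
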